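(* For every $d\ge 1$ there is a constant $C_d$ such that the following holds. Let $\sigma\in(0,1)$, let $B$ be a ball of radius $r>0$ in $\mathbb{R}^d$, and let $L$ be a finite set of closed line segments in $\mathbb{R}^d$ such that (i) $L$ is $\sigma$-exposed, (ii) every segment of $L$ intersects $B$, and (iii) every segment of $L$ has length at least $r$. Then $|L|\le C_d/\sigma^{2d+2}$.
   Context: For sets $X, Y\subseteq\mathbb{R}^d$ and $\sigma>0$, $X$ $\sigma$-shadows $Y$ if $\max_{q\in Y} \mathrm{dist}(q, X) \le \sigma\cdot \mathrm{diam}(Y)$, where $\mathrm{dist}(q,X)=\min_{p\in X}\|q-p\|$. A set of objects is $\sigma$-exposed if no object in the set $\sigma$-shadows another (distinct) object of the set. *)

theory Defs
  imports "HOL-Analysis.Analysis"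
begin

definition shadows :: "real \<Rightarrow> 'a::euclidean_space set \<Rightarrow> 'a set \<Rightarrow> bool" where
  "shadows \<sigma> X Y \<longleftrightarrow> (\<forall>q\<in>Y. infdist q X \<le> \<sigma> * diameter Y)"

definition exposed :: "real \<Rightarrow> 'a::euclidean_space set set \<Rightarrow> bool" where
  "exposed \<sigma> L \<longleftrightarrow> (\<forall>X\<in>L. \<forall>Y\<in>L. X \<noteq> Y \<longrightarrow> \<not> shadows \<sigma> X Y)"

end

theory Submission
  imports Defs
begin

text \<open>
  Code a segment [a, b] meeting cball c r by the cells, in a grid of mesh \<sigma>/(2d), of its
  endpoints after the similarity x \<mapsto> (x - c) / |b - a| (which maps them into the ball of
  radius 2), together with its length rounded down to a multiple of \<sigma> r / 2 and capped near
  2 r / \<sigma>. If two segments share a code, shrink the longer one by the ratio of the lengths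
  about a point of it near c: by convexity the shrunken copy stays within \<sigma>/2 times the
  shorter length of the longer segment, and its endpoints are within \<sigma>/2 times that length of
  the endpoints of the shorter one, so the longer segment \<sigma>-shadows the shorter. Hence the
  code is injective on an exposed family, and there are O(\<sigma>^-d)^2 \<cdot> O(\<sigma>^-2) codes.
\<close>

definition grid_cell :: "real \<Rightarrow> 'a::euclidean_space \<Rightarrow> 'a \<Rightarrow> int" where
  "grid_cell \<delta> u = (\<lambda>i\<in>Basis. \<lfloor>u \<bullet> i / \<delta>\<rfloor>)"

definition capped_level :: "real \<Rightarrow> nat \<Rightarrow> real \<Rightarrow> nat" where
  "capped_level h K l = min (nat \<lfloor>l / h\<rfloor>) K"

definition segment_code ::
    "real \<Rightarrow> real \<Rightarrow> nat \<Rightarrow> 'a::euclidean_space \<Rightarrow> 'a \<Rightarrow> 'a \<Rightarrow> ('a \<Rightarrow> int) \<times> ('a \<Rightarrow> int) \<times> nat" where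
  "segment_code \<delta> h K c a b =
     (grid_cell \<delta> ((1 / dist a b) *\<^sub>R (a - c)), grid_cell \<delta> ((1 / dist a b) *\<^sub>R (b - c)),
      capped_level h K (dist a b))"

lemma diameter_closed_segment:
  fixes a b :: "'a::euclidean_space"
  shows "diameter (closed_segment a b) = dist a b"
proof (rule antisym)
  show "diameter (closed_segment a b) \<le> dist a b"
  proof (rule diameter_le)
    fix x y assume "x \<in> closed_segment a b" "y \<in> closed_segment a b"
    then obtain u v where u: "x = (1 - u) *\<^sub>R a + u *\<^sub>R b" "0 \<le> u" "u \<le> 1"
      and v: "y = (1 - v) *\<^sub>R a + v *\<^sub>R b" "0 \<le> v" "v \<le> 1"
      by (auto simp: in_segment)
    have "x - y = (v - u) *\<^sub>R (a - b)" unfolding u(1) v(1) by (simp add: algebra_simps)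
    hence "norm (x - y) = \<bar>v - u\<bar> * dist a b" by (simp add: dist_norm)
    also have "\<dots> \<le> 1 * dist a b" using u v by (intro mult_right_mono) auto
    finally show "norm (x - y) \<le> dist a b" by simp
  qed simp
  show "dist a b \<le> diameter (closed_segment a b)"
    by (rule diameter_bounded_bound) (auto intro: compact_imp_bounded)
qed

lemma abs_diff_le_if_floor_divide_eq:
  fixes x y \<delta> :: real
  assumes "\<lfloor>x / \<delta>\<rfloor> = \<lfloor>y / \<delta>\<rfloor>" "0 < \<delta>"
  shows "\<bar>x - y\<bar> \<le> \<delta>"
proof -
  have "\<bar>x / \<delta> - y / \<delta>\<bar> < 1"
    using assms(1) floor_correct[of "x / \<delta>"] floor_correct[of "y / \<delta>"] by linarith
  hence "\<bar>x - y\<bar> / \<delta> < 1" using assms(2) by (simp add: diff_divide_distrib[symmetric])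
  thus ?thesis using assms(2) by (simp add: field_simps)
qed

lemma norm_diff_le_if_grid_cell_eq:
  fixes u v :: "'a::euclidean_space" and \<delta> :: real
  assumes "grid_cell \<delta> u = grid_cell \<delta> v" "0 < \<delta>"
  shows "norm (u - v) \<le> DIM('a) * \<delta>"
proof -
  have "\<bar>(u - v) \<bullet> i\<bar> \<le> \<delta>" if i: "i \<in> Basis" for i
  proof -
    have "\<lfloor>u \<bullet> i / \<delta>\<rfloor> = \<lfloor>v \<bullet> i / \<delta>\<rfloor>"
      using fun_cong[OF assms(1), of i] i by (simp add: grid_cell_def)
    from abs_diff_le_if_floor_divide_eq[OF this assms(2)] show ?thesis
      by (simp add: inner_diff_left)
  qed
  hence "(\<Sum>i\<in>Basis. \<bar>(u - v) \<bullet> i\<bar>) \<le> DIM('a) * \<delta>"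
    by (intro sum_bounded_above) auto
  thus ?thesis using norm_le_l1[of "u - v"] by linarith
qed

lemma grid_cell_in_box:
  fixes u :: "'a::euclidean_space"
  assumes "norm u \<le> R" "0 < \<delta>"
  shows "grid_cell \<delta> u \<in> Basis \<rightarrow>\<^sub>E {-\<lceil>R / \<delta>\<rceil>..\<lceil>R / \<delta>\<rceil>}"
  unfolding grid_cell_def
proof (rule PiE_I)
  fix i :: 'a assume "i \<in> Basis"
  hence "\<bar>u \<bullet> i\<bar> \<le> R" using Basis_le_norm[of i u] assms(1) by linarith
  hence "\<bar>u \<bullet> i / \<delta>\<bar> \<le> R / \<delta>" using assms(2) by (simp add: divide_right_mono)
  hence "- \<lceil>R / \<delta>\<rceil> \<le> u \<bullet> i / \<delta>" "u \<bullet> i / \<delta> \<le> \<lceil>R / \<delta>\<rceil>"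
    using le_of_int_ceiling[of "R / \<delta>"] by linarith+
  thus "(\<lambda>i\<in>Basis. \<lfloor>u \<bullet> i / \<delta>\<rfloor>) i \<in> {-\<lceil>R / \<delta>\<rceil>..\<lceil>R / \<delta>\<rceil>}"
    using \<open>i \<in> Basis\<close> by (simp add: le_floor_iff floor_le_iff)
qed auto

lemma capped_level_eq_cases:
  assumes "capped_level h K x = capped_level h K y" "0 < h" "0 \<le> x" "0 \<le> y"
  shows "\<bar>x - y\<bar> \<le> h \<or> (K * h \<le> x \<and> K * h \<le> y)"
proof (cases "nat \<lfloor>x / h\<rfloor> < K \<or> nat \<lfloor>y / h\<rfloor> < K")
  case True
  hence "nat \<lfloor>x / h\<rfloor> = nat \<lfloor>y / h\<rfloor>" using assms(1) by (auto simp: capped_level_def)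
  hence "\<lfloor>x / h\<rfloor> = \<lfloor>y / h\<rfloor>" using assms(2-4) by (simp add: eq_nat_nat_iff)
  thus ?thesis using abs_diff_le_if_floor_divide_eq assms(2) by blast
next
  case False
  moreover have "0 \<le> \<lfloor>x / h\<rfloor>" "0 \<le> \<lfloor>y / h\<rfloor>" using assms(2-4) by simp_all
  ultimately have "int K \<le> \<lfloor>x / h\<rfloor>" "int K \<le> \<lfloor>y / h\<rfloor>"
    using le_nat_iff not_less by blast+
  hence "K \<le> x / h" "K \<le> y / h" by (simp_all add: le_floor_iff)
  thus ?thesis using assms(2) by (simp add: field_simps)
qed

lemma length_ratio_defect_le:
  fixes \<sigma> r h l l' :: real
  assumes "capped_level h K l = capped_level h K l'" "0 < h" "h \<le> \<sigma> * r / 2"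
    and "2 * r \<le> \<sigma> * K * h" "0 < r" "r \<le> l'" "l' \<le> l"
  shows "(1 - l' / l) * r \<le> \<sigma> * l' / 2"
proof -
  have l: "0 < l" "0 < l'" using assms(5-7) by linarith+
  have "0 < \<sigma> * r" using assms(2,3) by linarith
  hence \<sigma>: "0 < \<sigma>" using assms(5) by (simp add: zero_less_mult_iff)
  from capped_level_eq_cases[OF assms(1,2)] l consider "l - l' \<le> h" | "K * h \<le> l'" by fastforce
  thus ?thesis
  proof cases
    case 1
    have "(1 - l' / l) * r = (l - l') * (r / l)" using l by (simp add: field_simps)
    also have "\<dots> \<le> h * 1" using 1 assms(5-7) l by (intro mult_mono) (auto simp: field_simps)
    also have "\<dots> \<le> \<sigma> * l' / 2" using assms(3) mult_left_mono[OF assms(6), of \<sigma>] \<sigma> by linarith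
    finally show ?thesis .
  next
    case 2
    have "(1 - l' / l) * r \<le> r" using l assms(5) by (simp add: field_simps)
    also have "\<dots> \<le> \<sigma> * (K * h) / 2" using assms(4) by simp
    also have "\<dots> \<le> \<sigma> * l' / 2" using 2 \<sigma> by simp
    finally show ?thesis .
  qed
qed

lemma convex_has_point_near_rescaled:
  fixes X :: "'a::real_normed_vector set"
  assumes "convex X" "e \<in> X" "p \<in> X" "dist p c \<le> r" "0 < l'" "l' \<le> l"
    and "norm ((1 / l') *\<^sub>R (f - c) - (1 / l) *\<^sub>R (e - c)) \<le> \<epsilon>"
  shows "\<exists>q\<in>X. dist f q \<le> l' * \<epsilon> + (1 - l' / l) * r"
proof -
  define t where "t = l' / l"
  have t: "0 \<le> t" "t \<le> 1" using assms(5,6) by (auto simp: t_def field_simps)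
  define q where "q = (1 - t) *\<^sub>R p + t *\<^sub>R e"
  have "q \<in> X" unfolding q_def using assms(1-3) t by (intro convexD) auto
  have "f - q = l' *\<^sub>R ((1 / l') *\<^sub>R (f - c) - (1 / l) *\<^sub>R (e - c)) - (1 - t) *\<^sub>R (p - c)"
    using assms(5,6) by (simp add: q_def t_def algebra_simps)
  hence "dist f q \<le> norm (l' *\<^sub>R ((1 / l') *\<^sub>R (f - c) - (1 / l) *\<^sub>R (e - c)))
                    + norm ((1 - t) *\<^sub>R (p - c))"
    by (metis dist_norm norm_triangle_ineq4)
  also have "\<dots> = l' * norm ((1 / l') *\<^sub>R (f - c) - (1 / l) *\<^sub>R (e - c)) + (1 - t) * dist p c"
    using assms(5) t by (simp add: dist_norm)
  also have "\<dots> \<le> l' * \<epsilon> + (1 - t) * r"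
    using assms(4,5,7) t by (intro add_mono mult_left_mono) auto
  finally show ?thesis using \<open>q \<in> X\<close> by (auto simp: t_def)
qed

lemma shadows_closed_segment_if_endpoints_near:
  fixes a b :: "'a::euclidean_space"
  assumes "convex X" "qa \<in> X" "qb \<in> X"
    and "dist a qa \<le> \<sigma> * dist a b" "dist b qb \<le> \<sigma> * dist a b"
  shows "shadows \<sigma> X (closed_segment a b)"
  unfolding shadows_def diameter_closed_segment
proof
  fix q assume "q \<in> closed_segment a b"
  then obtain s where s: "q = (1 - s) *\<^sub>R a + s *\<^sub>R b" "0 \<le> s" "s \<le> 1"
    by (auto simp: in_segment)
  define w where "w = (1 - s) *\<^sub>R qa + s *\<^sub>R qb"
  have "w \<in> X" unfolding w_def using assms(1-3) s by (intro convexD) auto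
  have "q - w = (1 - s) *\<^sub>R (a - qa) + s *\<^sub>R (b - qb)"
    using s by (simp add: w_def algebra_simps)
  hence "dist q w \<le> norm ((1 - s) *\<^sub>R (a - qa)) + norm (s *\<^sub>R (b - qb))"
    by (metis dist_norm norm_triangle_ineq)
  also have "\<dots> = (1 - s) * dist a qa + s * dist b qb"
    using s by (simp add: dist_norm)
  also have "\<dots> \<le> (1 - s) * (\<sigma> * dist a b) + s * (\<sigma> * dist a b)"
    using s assms(4,5) by (intro add_mono mult_left_mono) auto
  finally have "dist q w \<le> \<sigma> * dist a b" by (simp add: algebra_simps)
  with infdist_le[OF \<open>w \<in> X\<close>, of q] show "infdist q X \<le> \<sigma> * dist a b" by linarith
qed

lemma shadows_if_segment_code_eq:
  fixes a b a' b' c :: "'a::euclidean_space" and \<delta> \<sigma> h r :: real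
  assumes code: "segment_code \<delta> h K c a b = segment_code \<delta> h K c a' b'"
    and \<delta>: "0 < \<delta>" "DIM('a) * \<delta> \<le> \<sigma> / 2"
    and h: "0 < h" "h \<le> \<sigma> * r / 2" "2 * r \<le> \<sigma> * K * h"
    and r: "0 < r" "r \<le> dist a' b'" and le: "dist a' b' \<le> dist a b"
    and hit: "closed_segment a b \<inter> cball c r \<noteq> {}"
  shows "shadows \<sigma> (closed_segment a b) (closed_segment a' b')"
proof -
  let ?l = "dist a b" and ?l' = "dist a' b'"
  obtain p where p: "p \<in> closed_segment a b" "dist p c \<le> r"
    using hit by (auto simp: dist_commute)
  have defect: "(1 - ?l' / ?l) * r \<le> \<sigma> * ?l' / 2"
    using code length_ratio_defect_le[OF _ h r le] by (simp add: segment_code_def)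
  have near: "\<exists>q\<in>closed_segment a b. dist f q \<le> \<sigma> * ?l'"
    if e: "e \<in> closed_segment a b"
      and cell: "grid_cell \<delta> ((1 / ?l') *\<^sub>R (f - c)) = grid_cell \<delta> ((1 / ?l) *\<^sub>R (e - c))"
    for e f
  proof -
    have "norm ((1 / ?l') *\<^sub>R (f - c) - (1 / ?l) *\<^sub>R (e - c)) \<le> \<sigma> / 2"
      using norm_diff_le_if_grid_cell_eq[OF cell \<delta>(1)] \<delta>(2) by linarith
    moreover have "0 < ?l'" using r by linarith
    ultimately obtain q where
      "q \<in> closed_segment a b" "dist f q \<le> ?l' * (\<sigma> / 2) + (1 - ?l' / ?l) * r"
      using convex_has_point_near_rescaled[OF convex_closed_segment e p] le by blast
    thus ?thesis using defect by (intro bexI[of _ q]) (auto simp: field_simps)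
  qed
  obtain qa qb where "qa \<in> closed_segment a b" "dist a' qa \<le> \<sigma> * ?l'"
    and "qb \<in> closed_segment a b" "dist b' qb \<le> \<sigma> * ?l'"
    using near[of a a'] near[of b b'] code by (auto simp: segment_code_def)
  thus ?thesis by (intro shadows_closed_segment_if_endpoints_near convex_closed_segment)
qed

lemma segment_code_mem:
  fixes a b c :: "'a::euclidean_space" and \<delta> r :: real
  assumes "0 < \<delta>" "0 < r" "r \<le> dist a b" "closed_segment a b \<inter> cball c r \<noteq> {}"
  defines "N \<equiv> \<lceil>2 / \<delta>\<rceil>"
  shows "segment_code \<delta> h K c a b \<in> (Basis \<rightarrow>\<^sub>E {-N..N}) \<times> (Basis \<rightarrow>\<^sub>E {-N..N}) \<times> {..K}"
proof -
  obtain p where p: "p \<in> closed_segment a b" "dist p c \<le> r"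
    using assms(4) by (auto simp: dist_commute)
  have "norm ((1 / dist a b) *\<^sub>R (e - c)) \<le> 2" if "e \<in> {a, b}" for e
  proof -
    have "dist e p \<le> dist a b"
      using dist_in_closed_segment[OF p(1)] that by (auto simp: dist_commute)
    hence "norm (e - c) \<le> 2 * dist a b"
      using p(2) assms(3) dist_triangle[of e c p] by (simp add: dist_norm)
    thus ?thesis using assms(2,3) by (simp add: divide_le_eq)
  qed
  thus ?thesis using assms(1)
    by (auto simp: segment_code_def capped_level_def N_def intro!: grid_cell_in_box)
qed

lemma card_exposed_segments_le:
  fixes c :: "'a::euclidean_space" and \<delta> \<sigma> h r :: real
  assumes "exposed \<sigma> L"
    and seg: "\<And>S. S \<in> L \<Longrightarrow> S = closed_segment (A S) (B S)"
    and hit: "\<And>S. S \<in> L \<Longrightarrow> S \<inter> cball c r \<noteq> {}"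
    and long: "\<And>S. S \<in> L \<Longrightarrow> r \<le> diameter S"
    and \<delta>: "0 < \<delta>" "DIM('a) * \<delta> \<le> \<sigma> / 2"
    and h: "0 < h" "h \<le> \<sigma> * r / 2" "2 * r \<le> \<sigma> * K * h" and r: "0 < r"
  shows "card L \<le> nat (2 * \<lceil>2 / \<delta>\<rceil> + 1) ^ (2 * DIM('a)) * (K + 1)"
proof -
  define N where "N = \<lceil>2 / \<delta>\<rceil>"
  define cells :: "('a \<Rightarrow> int) set" where "cells = Basis \<rightarrow>\<^sub>E {-N..N}"
  define code where "code S = segment_code \<delta> h K c (A S) (B S)" for S
  have seg': "closed_segment (A S) (B S) = S" if "S \<in> L" for S
    using seg[OF that] by simp
  have len: "r \<le> dist (A S) (B S)" if "S \<in> L" for S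
    using long[OF that] diameter_closed_segment[of "A S" "B S"] by (simp add: seg'[OF that])
  have hit': "closed_segment (A S) (B S) \<inter> cball c r \<noteq> {}" if "S \<in> L" for S
    using hit[OF that] by (simp add: seg'[OF that])
  have shadow: "shadows \<sigma> X Y"
    if "X \<in> L" "Y \<in> L" "code X = code Y" "dist (A Y) (B Y) \<le> dist (A X) (B X)" for X Y
    using shadows_if_segment_code_eq[OF _ \<delta> h r len[OF that(2)] that(4) hit'[OF that(1)]] that(3)
    by (simp add: code_def seg'[OF that(1)] seg'[OF that(2)])
  have "inj_on code L"
  proof (rule inj_onI, rule ccontr)
    fix X Y assume XY: "X \<in> L" "Y \<in> L" "code X = code Y" "X \<noteq> Y"
    hence "\<not> shadows \<sigma> X Y" "\<not> shadows \<sigma> Y X"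
      using \<open>exposed \<sigma> L\<close> unfolding exposed_def by auto
    thus False using shadow[OF XY(1-3)] shadow[OF XY(2,1) XY(3)[symmetric]] by linarith
  qed
  moreover have "code ` L \<subseteq> cells \<times> cells \<times> {..K}"
    using segment_code_mem[OF \<delta>(1) r len hit', of _ h K]
    by (simp add: image_subset_iff code_def cells_def N_def)
  moreover have "finite (cells \<times> cells \<times> {..K})" unfolding cells_def by (simp add: finite_PiE)
  ultimately have "card L \<le> card (cells \<times> cells \<times> {..K})"
    by (rule card_inj_on_le)
  also have "\<dots> = card cells ^ 2 * (K + 1)"
    by (simp add: card_cartesian_product power2_eq_square algebra_simps)
  also have "\<dots> = nat (2 * N + 1) ^ (2 * DIM('a)) * (K + 1)"
    by (simp add: cells_def card_funcsetE power_mult[symmetric] mult.commute)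
  finally show ?thesis unfolding N_def .
qed

lemma grid_range_count_le:
  fixes x :: real
  assumes "1 \<le> x"
  shows "real (nat (2 * \<lceil>4 * x\<rceil> + 1)) \<le> 11 * x"
proof -
  have "real_of_int \<lceil>4 * x\<rceil> \<le> 4 * x + 1" by (rule of_int_ceiling_le_add_one)
  moreover have "0 \<le> \<lceil>4 * x\<rceil>" using assms by linarith
  hence "real (nat (2 * \<lceil>4 * x\<rceil> + 1)) = 2 * real_of_int \<lceil>4 * x\<rceil> + 1" by simp
  ultimately show ?thesis using assms by linarith
qed

lemma level_count_le:
  fixes y :: real
  assumes "1 \<le> y"
  shows "real (nat \<lceil>4 * y\<rceil> + 1) \<le> 6 * y"
proof -
  have "real_of_int \<lceil>4 * y\<rceil> \<le> 4 * y + 1" by (rule of_int_ceiling_le_add_one)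
  moreover have "0 \<le> \<lceil>4 * y\<rceil>" using assms by linarith
  hence "real (nat \<lceil>4 * y\<rceil> + 1) = real_of_int \<lceil>4 * y\<rceil> + 1" by simp
  ultimately show ?thesis using assms by linarith
qed

theorem mainTheorem7:
  "\<exists>C::real. \<forall>(\<sigma>::real) (r::real) (c::'a::euclidean_space) (L::'a set set).
      0 < \<sigma> \<and> \<sigma> < 1 \<and> 0 < r \<and> finite L
      \<and> (\<forall>S\<in>L. \<exists>a b. S = closed_segment a b)
      \<and> exposed \<sigma> L
      \<and> (\<forall>S\<in>L. S \<inter> cball c r \<noteq> {})
      \<and> (\<forall>S\<in>L. r \<le> diameter S)
      \<longrightarrow> real (card L) \<le> C / \<sigma> ^ (2 * DIM('a) + 2)"
proof (intro exI[of _ "6 * (11 * real DIM('a)) ^ (2 * DIM('a))"] allI impI, elim conjE)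
  fix \<sigma> r :: real and c :: 'a and L :: "'a set set"
  assume \<sigma>: "0 < \<sigma>" "\<sigma> < 1" and r: "0 < r" and "finite L" and exposed: "exposed \<sigma> L"
    and segs: "\<forall>S\<in>L. \<exists>a b. S = closed_segment a b"
    and hit: "\<forall>S\<in>L. S \<inter> cball c r \<noteq> {}" and long: "\<forall>S\<in>L. r \<le> diameter S"
  define n where "n = DIM('a)"
  define x where "x = real n / \<sigma>"
  define y where "y = 1 / \<sigma>\<^sup>2"
  define K where "K = nat \<lceil>4 * y\<rceil>"
  have n: "1 \<le> real n" using DIM_positive[where 'a='a] unfolding n_def by linarith
  have xy: "1 \<le> x" "1 \<le> y" using n \<sigma> by (simp_all add: x_def y_def field_simps power_le_one)
  obtain A B where seg: "\<forall>S\<in>L. S = closed_segment (A S) (B S)" using segs by metis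
  have "4 * y \<le> K" unfolding K_def by linarith
  hence "2 * r \<le> \<sigma> * K * (\<sigma> * r / 2)" using \<sigma> r by (simp add: y_def field_simps power2_eq_square)
  with card_exposed_segments_le[OF exposed, where A=A and B=B and c=c and r=r and K=K
      and \<delta>="\<sigma> / (2 * n)" and h="\<sigma> * r / 2"]
  have "card L \<le> nat (2 * \<lceil>4 * x\<rceil> + 1) ^ (2 * n) * (K + 1)"
    using seg hit long \<sigma> r n by (simp add: n_def x_def field_simps)
  hence "real (card L) \<le> real (nat (2 * \<lceil>4 * x\<rceil> + 1)) ^ (2 * n) * real (K + 1)"
    by (metis of_nat_le_iff of_nat_mult of_nat_power)
  also have "\<dots> \<le> (11 * x) ^ (2 * n) * (6 * y)"
    unfolding K_def using grid_range_count_le level_count_le xy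
    by (intro mult_mono power_mono) auto
  also have "\<dots> = 6 * (11 * real DIM('a)) ^ (2 * DIM('a)) / \<sigma> ^ (2 * DIM('a) + 2)"
    by (simp add: n_def x_def y_def power_divide power_add power2_eq_square mult_ac)
  finally show "real (card L) \<le> 6 * (11 * real DIM('a)) ^ (2 * DIM('a)) / \<sigma> ^ (2 * DIM('a) + 2)" .
qed

end
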